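(* There exists a vector subspace $V\subseteq C^0([0,1])$ of dimension $2^{\aleph_0}$ such that every non-zero $f\in V$ satisfies: for every $\alpha<1$ there is $C$ with $|f(x)-f(y)|\le C|x-y|^\alpha$ for all $x,y\in[0,1]$; $f$ has no finite one-sided derivative at any point of $[0,1]$; and every level set $\{x:f(x)=\lambda\}$, $\lambda\in\mathbb{R}$, has Hausdorff dimension $0$.
   Context: $C^0([0,1])$ denotes the space of continuous real-valued functions on $[0,1]$. *)

theory Defs
  imports "HOL-Analysis.Analysis" "HOL-Library.Function_Algebras" "HOL-Library.Equipollence"
begin

definition fscale :: "real \<Rightarrow> (real \<Rightarrow> real) \<Rightarrow> (real \<Rightarrow> real)" where
  "fscale c f = (\<lambda>x. c * f x)"

text \<open>C^0([0,1]) represented as continuous functions on [0,1], canonically extended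
  by zero outside [0,1] (so that it is a genuine set of functions closed under the
  pointwise operations; this is linearly isomorphic to C^0([0,1])).\<close>
definition C0_01 :: "(real \<Rightarrow> real) set" where
  "C0_01 = {f. continuous_on {0..1} f \<and> (\<forall>x. x \<notin> {0..1} \<longrightarrow> f x = 0)}"

definition hausdorff_pre :: "real \<Rightarrow> real \<Rightarrow> 'a::metric_space set \<Rightarrow> ennreal" where
  "hausdorff_pre s \<delta> A =
     (INF U \<in> {U :: nat \<Rightarrow> 'a set. A \<subseteq> (\<Union>i. U i) \<and>
                 (\<forall>i. bounded (U i) \<and> diameter (U i) \<le> \<delta>)}.
        (\<Sum>i. ennreal (diameter (U i) powr s)))"

text \<open>s-dimensional Hausdorff (outer) measure: limit as delta tends to 0,
  i.e. supremum over delta > 0 (the pre-measure is antitone in delta).\<close>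
definition hausdorff_measure :: "real \<Rightarrow> 'a::metric_space set \<Rightarrow> ennreal" where
  "hausdorff_measure s A = (SUP \<delta> \<in> {0<..}. hausdorff_pre s \<delta> A)"

definition hausdorff_dim :: "'a::metric_space set \<Rightarrow> ereal" where
  "hausdorff_dim A = Inf {ereal s | s. s \<ge> 0 \<and> hausdorff_measure s A = 0}"

end

theory Submission
  imports Defs
begin

(*
  The space is spanned by lacunary Takagi-type series
    f_d x = (SUM k. d k * (A k / A (k+1)) * dist (A (k+1) * x) Z),   A k = 2 ^ (k+1)!,
  with bounded coefficients d. Since A (k+1) = A k ^ (k+2), at the scale 1 / A (k+1) the k-th term
  dominates: it has slope +-(d k * A k), the earlier terms together have slope at most A k / 2^k,
  and the later ones are uniformly O(A (k+1) / A (k+2)). Hence, if |d k| >= m > 0 for infinitely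
  many k, the difference quotients at every point are unbounded from either side, and a level set
  meets each of the about 2 A (k+1) half-periods of the k-th term in a set of diameter
  O(A (k+1) / A (k+2)), which forces Hausdorff dimension 0. Hoelder continuity of every order
  alpha < 1 follows from the convergence of SUM k. (A k / A (k+1)) * A (k+1) powr alpha.

  Taking as coefficients the indicators of the codes of the finite prefixes of the sets t of
  naturals gives continuum many sequences with pairwise finite overlaps. A nontrivial finite
  combination of the corresponding series is again such a series, with a coefficient equal to a
  fixed nonzero value infinitely often; this gives linear independence and the properties of
  every nonzero element of the span.
*)

lemma sum_fun_apply: "(\<Sum>t\<in>T. f t) x = (\<Sum>t\<in>T. f t x)"
  by (induction T rule: infinite_finite_induct) auto

lemma eventually_le_mult_real:
  assumes "0 < c"
  shows "\<forall>\<^sub>F k in sequentially. b \<le> c * real k"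
proof -
  obtain K :: nat where "b / c \<le> real K" using real_arch_simple by blast
  then show ?thesis
    using assms by (intro eventually_sequentiallyI[of K]) (auto simp: field_simps elim!: order_trans)
qed

lemma eventually_le_power_2: "\<forall>\<^sub>F k in sequentially. c \<le> (2::real) ^ k"
proof -
  obtain K where "c < 2 ^ K" using real_arch_pow[of 2 c] by auto
  then show ?thesis
    by (intro eventually_sequentiallyI[of K]) (auto intro: order_trans[OF less_imp_le power_increasing])
qed

lemma min_one_le_powr:
  fixes u :: real
  assumes "0 \<le> u" "0 \<le> \<alpha>" "\<alpha> \<le> 1"
  shows "min 1 u \<le> u powr \<alpha>"
proof (cases "1 \<le> u")
  case True
  then show ?thesis using ge_one_powr_ge_zero[OF True assms(2)] by simp
next
  case False
  have "u powr 1 \<le> u powr \<alpha>"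
    using False assms by (intro powr_mono') auto
  then show ?thesis using False assms(1) by (cases "u = 0") auto
qed

lemma holder_imp_continuous_on:
  fixes f :: "real \<Rightarrow> real"
  assumes "0 < \<alpha>" "\<And>x y. x \<in> S \<Longrightarrow> y \<in> S \<Longrightarrow> \<bar>f x - f y\<bar> \<le> C * \<bar>x - y\<bar> powr \<alpha>"
  shows "continuous_on S f"
  unfolding continuous_on_def
proof
  fix x assume x: "x \<in> S"
  have "((\<lambda>y. \<bar>y - x\<bar>) \<longlongrightarrow> 0) (at x within S)"
    by (rule tendsto_rabs_zero) (rule LIM_zero[OF tendsto_ident_at])
  then have lim: "((\<lambda>y. C * \<bar>y - x\<bar> powr \<alpha>) \<longlongrightarrow> 0) (at x within S)"
    using assms(1) by (intro tendsto_mult_right_zero tendsto_zero_powrI[OF _ tendsto_const]) auto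
  have bound: "\<forall>\<^sub>F y in at x within S. norm (f y - f x) \<le> C * \<bar>y - x\<bar> powr \<alpha>"
    unfolding eventually_at_filter by (rule always_eventually) (use assms(2) x in auto)
  show "(f \<longlongrightarrow> f x) (at x within S)"
    by (rule LIM_zero_cancel) (rule Lim_null_comparison[OF bound lim])
qed

lemma not_has_real_derivative_if_unbounded_slopes:
  fixes f :: "real \<Rightarrow> real"
  assumes "\<And>B r. 0 < r \<Longrightarrow> \<exists>y\<in>S. y \<noteq> x \<and> \<bar>y - x\<bar> < r \<and> B \<le> \<bar>(f y - f x) / (y - x)\<bar>"
  shows "\<not> (f has_real_derivative D) (at x within S)"
proof
  assume "(f has_real_derivative D) (at x within S)"
  then have "((\<lambda>y. (f y - f x) / (y - x)) \<longlongrightarrow> D) (at x within S)"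
    by (simp add: has_field_derivative_iff)
  then have "\<forall>\<^sub>F y in at x within S. dist ((f y - f x) / (y - x)) D < 1"
    by (rule tendstoD) simp
  then obtain r where "0 < r"
    and r: "\<And>y. y \<in> S \<Longrightarrow> y \<noteq> x \<Longrightarrow> dist y x < r \<Longrightarrow> dist ((f y - f x) / (y - x)) D < 1"
    unfolding eventually_at by blast
  obtain y where "y \<in> S" "y \<noteq> x" "\<bar>y - x\<bar> < r" "\<bar>D\<bar> + 1 \<le> \<bar>(f y - f x) / (y - x)\<bar>"
    using assms[OF \<open>0 < r\<close>] by blast
  moreover from this r have "\<bar>(f y - f x) / (y - x) - D\<bar> < 1"
    by (simp add: dist_real_def)
  ultimately show False by arith
qed

lemma hausdorff_pre_le_finite_cover:
  fixes A :: "'a::real_normed_vector set"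
  assumes cover: "A \<subseteq> (\<Union>i<n. U i)"
    and close: "\<And>i x y. i < n \<Longrightarrow> x \<in> U i \<Longrightarrow> y \<in> U i \<Longrightarrow> norm (x - y) \<le> w"
    and w: "0 \<le> w" "w \<le> \<delta>" and s: "0 \<le> s"
  shows "hausdorff_pre s \<delta> A \<le> ennreal (real n * w powr s)"
proof -
  define V where "V i = (if i < n then U i else {})" for i
  have bdd: "bounded (V i)" for i
  proof (cases "V i = {}")
    case False
    then obtain x0 where "x0 \<in> V i" by blast
    then have "V i \<subseteq> cball x0 w"
      using close unfolding V_def by (auto simp: dist_norm split: if_splits)
    then show ?thesis by (rule bounded_subset[OF bounded_cball])
  qed simp
  have diam: "diameter (V i) \<le> w" for i
    using close w unfolding V_def by (intro diameter_le) (auto split: if_splits)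
  have "A \<subseteq> (\<Union>i. V i)"
    using cover unfolding V_def by force
  then have "hausdorff_pre s \<delta> A \<le> (\<Sum>i. ennreal (diameter (V i) powr s))"
    unfolding hausdorff_pre_def using bdd diam w by (intro INF_lower) (blast intro: order_trans)
  also have "\<dots> = (\<Sum>i<n. ennreal (diameter (V i) powr s))"
    by (rule suminf_finite) (auto simp: V_def)
  also have "\<dots> \<le> (\<Sum>i<n. ennreal (w powr s))"
    using bdd diam s by (intro sum_mono ennreal_leI powr_mono2) (auto simp: diameter_ge_0)
  also have "\<dots> = ennreal (real n * w powr s)"
    by (simp add: ennreal_mult' ennreal_of_nat_eq_real_of_nat)
  finally show ?thesis .
qed

lemma hausdorff_dim_eq_0I:
  assumes "\<And>s \<delta>. 0 < s \<Longrightarrow> 0 < \<delta> \<Longrightarrow> hausdorff_pre s \<delta> A = 0"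
  shows "hausdorff_dim A = 0"
proof -
  define S where "S = {ereal s | s. s \<ge> 0 \<and> hausdorff_measure s A = 0}"
  have "ereal s \<in> S" if "0 < s" for s
    using assms[OF that] that unfolding S_def hausdorff_measure_def by auto
  then have le: "Inf S \<le> ereal e" if "0 < e" for e
    using that by (blast intro: Inf_lower)
  have "Inf S \<le> 0"
  proof (rule ereal_le_epsilon2)
    show "Inf S \<le> 0 + ereal e" if "0 < e" for e
      using le[OF that] by simp
  qed
  moreover have "0 \<le> Inf S"
    by (rule Inf_greatest) (clarsimp simp: S_def)
  ultimately show ?thesis
    unfolding hausdorff_dim_def S_def[symmetric] by simp
qed

context module
begin

lemma span_range_explicit:
  assumes "x \<in> span (range f)"
  obtains T c where "finite T" "x = (\<Sum>t\<in>T. scale (c t) (f t))"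
proof -
  obtain S r where S: "finite S" "S \<subseteq> range f" "x = (\<Sum>a\<in>S. scale (r a) a)"
    using assms unfolding span_explicit by blast
  obtain T where T: "inj_on f T" "S = f ` T"
    using S(2) subset_image_inj by metis
  show ?thesis
    using S T by (intro that[of T "r \<circ> f"]) (auto simp: finite_image_iff sum.reindex)
qed

lemma dependent_range_explicit:
  assumes "dependent (range f)"
  obtains T c t0 where "finite T" "t0 \<in> T" "c t0 \<noteq> 0" "(\<Sum>t\<in>T. scale (c t) (f t)) = 0"
proof -
  obtain S u v where S: "finite S" "S \<subseteq> range f" "(\<Sum>a\<in>S. scale (u a) a) = 0" "v \<in> S" "u v \<noteq> 0"
    using assms unfolding dependent_explicit by blast
  obtain T where T: "inj_on f T" "S = f ` T"
    using S(2) subset_image_inj by metis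
  then obtain t0 where "t0 \<in> T" "v = f t0" using S(4) by blast
  then show ?thesis
    using S T by (intro that[of T t0 "u \<circ> f"]) (auto simp: finite_image_iff sum.reindex)
qed

end

definition dist_int :: "real \<Rightarrow> real" where
  "dist_int u = \<bar>u - of_int (round u)\<bar>"

lemma dist_int_le: "dist_int u \<le> \<bar>u - of_int n\<bar>"
  unfolding dist_int_def by (rule round_diff_minimal)

lemma dist_int_nonneg: "0 \<le> dist_int u"
  unfolding dist_int_def by simp

lemma dist_int_le_half: "dist_int u \<le> 1/2"
  unfolding dist_int_def using of_int_round_abs_le[of u] by linarith

lemma dist_int_eq:
  assumes "\<bar>u - of_int n\<bar> \<le> 1/2"
  shows "dist_int u = \<bar>u - of_int n\<bar>"
proof (rule antisym[OF dist_int_le])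
  show "\<bar>u - of_int n\<bar> \<le> dist_int u"
  proof (cases "round u = n")
    case False
    then have "1 \<le> \<bar>round u - n\<bar>" by linarith
    then have "(1::real) \<le> \<bar>of_int (round u) - of_int n\<bar>"
      by (metis of_int_1_le_iff of_int_abs of_int_diff)
    then show ?thesis unfolding dist_int_def using assms by linarith
  qed (simp add: dist_int_def)
qed

lemma dist_int_lipschitz: "\<bar>dist_int u - dist_int v\<bar> \<le> \<bar>u - v\<bar>"
  using dist_int_le[of u "round v"] dist_int_le[of v "round u"]
  unfolding dist_int_def by linarith

lemma dist_int_plus_1: "dist_int (u + 1) = dist_int u"
  using dist_int_eq[of "u + 1" "round u + 1"] of_int_round_abs_le[of u]
  by (simp add: dist_int_def[of u] abs_minus_commute)

lemma dist_int_minus: "dist_int (- u) = dist_int u"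
  using dist_int_eq[of "- u" "- round u"] of_int_round_abs_le[of u]
  by (simp add: dist_int_def[of u] abs_minus_commute)

lemma dist_int_diff_on_half_interval:
  fixes i :: int
  assumes "u \<in> {of_int i / 2 .. (of_int i + 1) / 2}" "v \<in> {of_int i / 2 .. (of_int i + 1) / 2}"
  shows "\<bar>dist_int u - dist_int v\<bar> = \<bar>u - v\<bar>"
proof (cases "even i")
  case True
  then obtain n where "i = 2 * n" by blast
  then have "dist_int w = w - of_int n" if "w \<in> {of_int i / 2 .. (of_int i + 1) / 2}" for w
    using dist_int_eq[of w n] that by auto
  then show ?thesis using assms by simp
next
  case False
  then obtain n where "i = 2 * n + 1" by (metis odd_two_times_div_two_succ)
  then have "dist_int w = of_int n + 1 - w" if "w \<in> {of_int i / 2 .. (of_int i + 1) / 2}" for w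
    using dist_int_eq[of w "n + 1"] that by auto
  then show ?thesis using assms by simp
qed

lemma dist_int_jump:
  assumes "\<bar>\<sigma>\<bar> = 1"
  shows "\<exists>t \<in> {1/4..1}. 1/4 \<le> \<bar>dist_int (u + \<sigma> * t) - dist_int u\<bar>"
proof -
  have forward: "\<exists>t \<in> {1/4..1}. 1/4 \<le> \<bar>dist_int (v + t) - dist_int v\<bar>" for v
  proof -
    define p where "p = of_int \<lfloor>2 * v\<rfloor> / (2::real)"
    have v: "v \<in> {p .. p + 1/2}"
      unfolding p_def using floor_correct[of "2 * v"] by (auto simp: field_simps)
    have piece: "\<bar>dist_int w - dist_int v\<bar> = \<bar>w - v\<bar>" if "w \<in> {p .. p + 1/2}" for w
      using dist_int_diff_on_half_interval[of w "\<lfloor>2 * v\<rfloor>" v] that v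
      by (simp add: p_def add_divide_distrib)
    show ?thesis
    proof (cases "v \<le> p + 1/4")
      case True
      then show ?thesis using piece[of "p + 1/2"] v
        by (intro bexI[of _ "p + 1/2 - v"]) auto
    next
      case False
      then show ?thesis using piece[of p] v dist_int_plus_1[of p]
        by (intro bexI[of _ "p + 1 - v"]) auto
    qed
  qed
  show ?thesis
  proof (cases "\<sigma> = 1")
    case False
    then have "\<sigma> = -1" using assms by linarith
    moreover obtain t where "t \<in> {1/4..1}" "1/4 \<le> \<bar>dist_int (- u + t) - dist_int (- u)\<bar>"
      using forward by blast
    ultimately show ?thesis using dist_int_minus[of "u - t"] dist_int_minus[of u] by auto
  qed (use forward in simp)
qed

lemma half_period_index:
  fixes b x :: real
  assumes "0 \<le> b" "x \<in> {0..1}"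
  shows "\<exists>i < Suc (nat \<lfloor>2 * b\<rfloor>). b * x \<in> {of_int (int i) / 2 .. (of_int (int i) + 1) / 2}"
proof -
  define i where "i = nat \<lfloor>2 * b * x\<rfloor>"
  have "0 \<le> 2 * b * x" "2 * b * x \<le> 2 * b"
    using assms by (auto simp: mult_left_le)
  then have "i < Suc (nat \<lfloor>2 * b\<rfloor>)" "real i \<le> 2 * b * x" "2 * b * x < real i + 1"
    unfolding i_def by (auto intro!: nat_mono floor_mono simp: less_Suc_eq_le)
  then show ?thesis by (intro exI[of _ i]) (simp add: field_simps)
qed

text \<open>With \<open>A k = lac_scale k = 2 ^ (k+1)!\<close> we have \<open>A (k+1) = A k ^ (k+2)\<close>; the \<open>k\<close>-th term of
  the series has amplitude \<open>lac_amp k = A k / A (k+1)\<close> and frequency \<open>A (k+1)\<close>, hence slope \<open>\<plusminus>A k\<close>.\<close>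

definition lac_scale :: "nat \<Rightarrow> real" where
  "lac_scale k = 2 powr fact (Suc k)"

definition lac_amp :: "nat \<Rightarrow> real" where
  "lac_amp k = lac_scale k / lac_scale (Suc k)"

lemma lac_scale_pos: "0 < lac_scale k"
  unfolding lac_scale_def by simp

lemma lac_scale_Suc: "lac_scale (Suc k) = lac_scale k powr (real k + 2)"
  unfolding lac_scale_def powr_powr by (simp add: fact_Suc[of "Suc k"] algebra_simps)

lemma lac_scale_ge_pow_Suc: "2 ^ Suc k \<le> lac_scale k"
proof -
  have "real (Suc k) \<le> fact (Suc k)"
    by (metis fact_ge_self of_nat_fact of_nat_le_iff)
  then have "2 powr real (Suc k) \<le> lac_scale k"
    unfolding lac_scale_def by (intro powr_mono) auto
  moreover have "(2::real) powr real (Suc k) = 2 ^ Suc k"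
    by (rule powr_realpow) simp
  ultimately show ?thesis by simp
qed

lemma lac_scale_ge_pow: "2 ^ k \<le> lac_scale k"
proof -
  have "(2::real) ^ k \<le> 2 ^ Suc k" by simp
  then show ?thesis using lac_scale_ge_pow_Suc[of k] by linarith
qed

lemma lac_scale_ge_2: "2 \<le> lac_scale k"
proof -
  have "(2::real) \<le> 2 ^ Suc k" by simp
  then show ?thesis using lac_scale_ge_pow_Suc[of k] by linarith
qed

lemma lac_scale_powr_le:
  assumes "e \<le> -1"
  shows "lac_scale k powr e \<le> (1/2) ^ Suc k"
proof -
  have "lac_scale k powr e \<le> lac_scale k powr -1"
    using assms lac_scale_ge_2[of k] by (intro powr_mono) auto
  also have "\<dots> = 1 / lac_scale k"
    using lac_scale_pos[of k] by (simp add: powr_minus divide_inverse)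
  also have "\<dots> \<le> 1 / 2 ^ Suc k"
    using lac_scale_ge_pow_Suc[of k] lac_scale_pos[of k] by (intro divide_left_mono) auto
  finally show ?thesis by (simp add: power_divide)
qed

lemma lac_amp_eq: "lac_amp k = lac_scale k powr - (real k + 1)"
proof -
  have "lac_amp k = lac_scale k powr 1 / lac_scale k powr (real k + 2)"
    unfolding lac_amp_def lac_scale_Suc using lac_scale_pos[of k] by simp
  also have "\<dots> = lac_scale k powr (1 - (real k + 2))"
    by (rule powr_diff[symmetric])
  also have "\<dots> = lac_scale k powr - (real k + 1)"
    by (rule arg_cong[where f="\<lambda>e. lac_scale k powr e"]) simp
  finally show ?thesis .
qed

lemma lac_amp_pos: "0 < lac_amp k"
  unfolding lac_amp_def using lac_scale_pos by simp

lemma lac_amp_le: "lac_amp k \<le> (1/2) ^ Suc k"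
  unfolding lac_amp_eq by (rule lac_scale_powr_le) simp

lemma summable_lac_amp: "summable lac_amp"
proof (rule summable_comparison_test')
  show "summable (\<lambda>k. (1/2::real) ^ Suc k)" by simp
  show "norm (lac_amp k) \<le> (1/2) ^ Suc k" for k
    using lac_amp_le[of k] lac_amp_pos[of k] by simp
qed

lemma lac_scale_mult_amp_le: "lac_scale k * lac_amp k \<le> 1"
proof -
  have "lac_scale k * lac_amp k = lac_scale k powr 1 * lac_scale k powr - (real k + 1)"
    unfolding lac_amp_eq using lac_scale_pos[of k] by simp
  also have "\<dots> = lac_scale k powr (1 + - (real k + 1))"
    by (rule powr_add[symmetric])
  also have "\<dots> = lac_scale k powr - real k"
    by (rule arg_cong[where f="\<lambda>e. lac_scale k powr e"]) simp
  also have "\<dots> \<le> lac_scale k powr 0"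
    using lac_scale_ge_2[of k] by (intro powr_mono) auto
  also have "\<dots> = 1"
    using lac_scale_pos[of k] by simp
  finally show ?thesis .
qed

lemma lac_amp_Suc_le: "lac_amp (Suc k) \<le> lac_amp k / 2"
proof -
  have "lac_amp (Suc k) = lac_scale k powr (- (real k + 2) * (real k + 2))"
    unfolding lac_amp_eq lac_scale_Suc powr_powr by (simp add: algebra_simps)
  also have "\<dots> \<le> lac_scale k powr (- (real k + 1) - 1)"
  proof (rule powr_mono)
    show "- (real k + 2) * (real k + 2) \<le> - (real k + 1) - 1"
      by (simp add: algebra_simps) (smt (verit) mult_nonneg_nonneg of_nat_0_le_iff)
  qed (use lac_scale_ge_2[of k] in simp)
  also have "\<dots> = lac_scale k powr - (real k + 1) / lac_scale k powr 1"
    by (rule powr_diff)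
  also have "\<dots> = lac_amp k / lac_scale k"
    unfolding lac_amp_eq using lac_scale_pos[of k] by simp
  also have "\<dots> \<le> lac_amp k / 2"
    using lac_scale_ge_2[of k] lac_amp_pos[of k] by (intro divide_left_mono) auto
  finally show ?thesis .
qed

lemma lac_amp_shift_le: "lac_amp (j + k) \<le> lac_amp k * (1/2) ^ j"
proof (induction j)
  case (Suc j)
  then show ?case using lac_amp_Suc_le[of "j + k"] by simp
qed simp

lemma sum_lac_scale_le: "(\<Sum>j<k. lac_scale j) \<le> lac_scale k / 2 ^ k"
proof (cases k)
  case (Suc n)
  have "(\<Sum>j\<le>n. lac_scale j) \<le> lac_scale (Suc n) / 2 ^ Suc n"
  proof (induction n)
    case 0
    then show ?case by (simp add: lac_scale_def)
  next
    case (Suc n)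
    define A where "A = lac_scale (Suc n)"
    have A: "2 ^ Suc (Suc n) \<le> A" "2 \<le> A"
      unfolding A_def by (rule lac_scale_ge_pow_Suc lac_scale_ge_2)+
    then have "2 + 2 ^ Suc (Suc n) \<le> 2 * A" by linarith
    also have "\<dots> \<le> A * A" using A by (intro mult_right_mono) auto
    finally have "A * (2 + 2 ^ Suc (Suc n)) \<le> A * A * A"
      using A by (simp add: mult_left_mono mult.assoc)
    also have "\<dots> = A powr 3"
      using lac_scale_pos[of "Suc n"] unfolding A_def by (simp add: powr_numeral power3_eq_cube)
    also have "\<dots> \<le> lac_scale (Suc (Suc n))"
      unfolding lac_scale_Suc[of "Suc n"] A_def using lac_scale_ge_2[of "Suc n"] by (intro powr_mono) auto
    finally have A3: "A * (2 + 2 ^ Suc (Suc n)) \<le> lac_scale (Suc (Suc n))" .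
    have "(\<Sum>j\<le>Suc n. lac_scale j) \<le> A / 2 ^ Suc n + A"
      using Suc.IH unfolding A_def by simp
    also have "\<dots> = A * (2 + 2 ^ Suc (Suc n)) / 2 ^ Suc (Suc n)"
      by (simp add: field_simps)
    also have "\<dots> \<le> lac_scale (Suc (Suc n)) / 2 ^ Suc (Suc n)"
      by (rule divide_right_mono[OF A3]) simp
    finally show ?case .
  qed
  then show ?thesis using Suc by (simp add: lessThan_Suc_atMost)
qed (simp add: lac_scale_pos less_imp_le)

lemma summable_lac_amp_mult_powr:
  assumes "\<alpha> < 1"
  shows "summable (\<lambda>k. lac_amp k * lac_scale (Suc k) powr \<alpha>)"
proof (rule summable_comparison_test_ev)
  show "summable (\<lambda>k. (1/2::real) ^ Suc k)" by simp
  have "\<forall>\<^sub>F k in sequentially. 2 * \<alpha> \<le> (1 - \<alpha>) * real k"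
    using eventually_le_mult_real[of "1 - \<alpha>" "2 * \<alpha>"] assms by simp
  then show "\<forall>\<^sub>F k in sequentially. norm (lac_amp k * lac_scale (Suc k) powr \<alpha>) \<le> (1/2) ^ Suc k"
  proof eventually_elim
    case (elim k)
    have "lac_amp k * lac_scale (Suc k) powr \<alpha>
        = lac_scale k powr - (real k + 1) * lac_scale k powr ((real k + 2) * \<alpha>)"
      unfolding lac_amp_eq lac_scale_Suc powr_powr ..
    also have "\<dots> = lac_scale k powr (- (real k + 1) + (real k + 2) * \<alpha>)"
      by (rule powr_add[symmetric])
    also have "\<dots> \<le> (1/2) ^ Suc k"
      using elim by (intro lac_scale_powr_le) (simp add: algebra_simps)
    finally show ?case using lac_amp_pos[of k] lac_scale_pos[of "Suc k"] by simp
  qed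
qed

lemma lac_scale_mult_amp_powr_tendsto_0:
  assumes "0 < s"
  shows "(\<lambda>k. lac_scale k * lac_amp k powr s) \<longlonglongrightarrow> 0"
proof (rule Lim_null_comparison)
  show "(\<lambda>k. (1/2::real) ^ Suc k) \<longlonglongrightarrow> 0"
    by (rule LIMSEQ_Suc) (simp add: LIMSEQ_power_zero)
  show "\<forall>\<^sub>F k in sequentially. norm (lac_scale k * lac_amp k powr s) \<le> (1/2) ^ Suc k"
    using eventually_le_mult_real[of s "2 - s", OF assms]
  proof eventually_elim
    case (elim k)
    have "lac_scale k * lac_amp k powr s
        = lac_scale k powr 1 * lac_scale k powr (- (real k + 1) * s)"
      unfolding lac_amp_eq powr_powr using lac_scale_pos[of k] by simp
    also have "\<dots> = lac_scale k powr (1 + - (real k + 1) * s)"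
      by (rule powr_add[symmetric])
    also have "\<dots> \<le> (1/2) ^ Suc k"
      using elim by (intro lac_scale_powr_le) (simp add: algebra_simps)
    finally show ?case using lac_scale_pos[of k] by simp
  qed
qed

section \<open>The lacunary series\<close>

definition lac_term :: "(nat \<Rightarrow> real) \<Rightarrow> real \<Rightarrow> nat \<Rightarrow> real" where
  "lac_term d x k = d k * lac_amp k * dist_int (lac_scale (Suc k) * x)"

definition lacunary :: "(nat \<Rightarrow> real) \<Rightarrow> real \<Rightarrow> real" where
  "lacunary d x = (\<Sum>k. lac_term d x k)"

lemma abs_lac_term_le:
  assumes "\<bar>d k\<bar> \<le> M"
  shows "\<bar>lac_term d x k\<bar> \<le> M * lac_amp k / 2"
proof -
  have "\<bar>lac_term d x k\<bar> = \<bar>d k\<bar> * lac_amp k * dist_int (lac_scale (Suc k) * x)"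
    unfolding lac_term_def using lac_amp_pos[of k] dist_int_nonneg by (simp add: abs_mult)
  also have "\<dots> \<le> M * lac_amp k * (1/2)"
    using assms lac_amp_pos[of k] dist_int_nonneg dist_int_le_half
    by (intro mult_mono) (simp_all add: less_imp_le)
  finally show ?thesis by simp
qed

lemma summable_lac_term:
  assumes "\<And>k. \<bar>d k\<bar> \<le> M"
  shows "summable (lac_term d x)"
proof (rule summable_comparison_test')
  show "summable (\<lambda>k. M * lac_amp k / 2)"
    by (intro summable_divide summable_mult summable_lac_amp)
  show "norm (lac_term d x k) \<le> M * lac_amp k / 2" for k
    using abs_lac_term_le assms by simp
qed

lemma abs_lac_term_diff:
  "\<bar>lac_term d y k - lac_term d x k\<bar>
     = \<bar>d k\<bar> * lac_amp k * \<bar>dist_int (lac_scale (Suc k) * y) - dist_int (lac_scale (Suc k) * x)\<bar>"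
  unfolding lac_term_def using lac_amp_pos[of k]
  by (simp add: abs_mult right_diff_distrib[symmetric] mult.assoc)

lemma lac_term_lipschitz:
  assumes "\<bar>d k\<bar> \<le> M"
  shows "\<bar>lac_term d y k - lac_term d x k\<bar> \<le> M * lac_scale k * \<bar>y - x\<bar>"
proof -
  have "\<bar>dist_int (lac_scale (Suc k) * y) - dist_int (lac_scale (Suc k) * x)\<bar> \<le> lac_scale (Suc k) * \<bar>y - x\<bar>"
    using dist_int_lipschitz[of "lac_scale (Suc k) * y" "lac_scale (Suc k) * x"] lac_scale_pos[of "Suc k"]
    by (simp add: abs_mult right_diff_distrib[symmetric])
  then have "\<bar>lac_term d y k - lac_term d x k\<bar> \<le> M * lac_amp k * (lac_scale (Suc k) * \<bar>y - x\<bar>)"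
    unfolding abs_lac_term_diff using assms lac_amp_pos[of k]
    by (intro mult_mono) (simp_all add: less_imp_le)
  then show ?thesis
    unfolding lac_amp_def using lac_scale_pos[of "Suc k"] by simp
qed

lemma abs_lac_tail_le:
  assumes "\<And>k. \<bar>d k\<bar> \<le> M"
  shows "\<bar>\<Sum>j. lac_term d x (j + Suc k)\<bar> \<le> M * lac_amp (Suc k)"
proof -
  have M: "0 \<le> M" using assms[of 0] by simp
  have tail: "(\<lambda>j. lac_term d x (j + Suc k)) sums (\<Sum>j. lac_term d x (j + Suc k))"
    using summable_lac_term[OF assms] by (intro summable_sums summable_ignore_initial_segment)
  have "(\<lambda>j. (1/2::real) ^ j) sums 2"
    using geometric_sums[of "1/2::real"] by simp
  then have geom: "(\<lambda>j. M / 2 * (lac_amp (Suc k) * (1/2) ^ j)) sums (M / 2 * (lac_amp (Suc k) * 2))"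
    by (intro sums_mult)
  have "norm (lac_term d x (j + Suc k)) \<le> M / 2 * (lac_amp (Suc k) * (1/2) ^ j)" for j
  proof -
    have "\<bar>lac_term d x (j + Suc k)\<bar> \<le> M * lac_amp (j + Suc k) / 2"
      by (rule abs_lac_term_le[OF assms])
    also have "\<dots> \<le> M * (lac_amp (Suc k) * (1/2) ^ j) / 2"
      using lac_amp_shift_le[of j "Suc k"] M by (intro divide_right_mono mult_left_mono) auto
    finally show ?thesis by simp
  qed
  then have "norm (\<Sum>j. lac_term d x (j + Suc k)) \<le> M / 2 * (lac_amp (Suc k) * 2)"
    by (rule norm_sums_le[OF tail geom])
  then show ?thesis by simp
qed

text \<open>At scale \<open>1 / A (k+1)\<close> the \<open>k\<close>-th term dominates: the earlier terms have total
  Lipschitz constant at most \<open>M * A k / 2 ^ k\<close> and the tail is uniformly \<open>O(lac_amp (k+1))\<close>.\<close>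

lemma lacunary_diff_approx:
  assumes "\<And>k. \<bar>d k\<bar> \<le> M"
  shows "\<bar>lacunary d y - lacunary d x - (lac_term d y k - lac_term d x k)\<bar>
           \<le> M * \<bar>y - x\<bar> * lac_scale k / 2 ^ k + 2 * M * lac_amp (Suc k)"
proof -
  have M: "0 \<le> M" using assms[of 0] by simp
  have split: "lacunary d z = (\<Sum>j<k. lac_term d z j) + lac_term d z k + (\<Sum>j. lac_term d z (j + Suc k))" for z
    unfolding lacunary_def using suminf_split_initial_segment[OF summable_lac_term[OF assms], where k="Suc k"]
    by simp
  have "\<bar>(\<Sum>j<k. lac_term d y j) - (\<Sum>j<k. lac_term d x j)\<bar> \<le> (\<Sum>j<k. \<bar>lac_term d y j - lac_term d x j\<bar>)"
    by (simp add: sum_subtractf[symmetric] sum_abs)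
  also have "\<dots> \<le> (\<Sum>j<k. M * \<bar>y - x\<bar> * lac_scale j)"
    using lac_term_lipschitz[OF assms] by (intro sum_mono) (simp add: mult_ac)
  also have "\<dots> = M * \<bar>y - x\<bar> * (\<Sum>j<k. lac_scale j)"
    by (simp add: sum_distrib_left)
  also have "\<dots> \<le> M * \<bar>y - x\<bar> * (lac_scale k / 2 ^ k)"
    using sum_lac_scale_le[of k] M by (intro mult_left_mono) auto
  also have "\<dots> = M * \<bar>y - x\<bar> * lac_scale k / 2 ^ k"
    by simp
  finally show ?thesis
    using split[of x] split[of y] abs_lac_tail_le[where d=d and M=M and x=y and k=k, OF assms]
      abs_lac_tail_le[where d=d and M=M and x=x and k=k, OF assms]
    by linarith
qed

lemma lacunary_holder:
  assumes "\<And>k. \<bar>d k\<bar> \<le> M" "0 \<le> \<alpha>" "\<alpha> < 1"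
  shows "\<bar>lacunary d x - lacunary d y\<bar>
           \<le> M * (\<Sum>k. lac_amp k * lac_scale (Suc k) powr \<alpha>) * \<bar>x - y\<bar> powr \<alpha>"
proof -
  define h where "h = \<bar>x - y\<bar>"
  have M: "0 \<le> M" using assms(1)[of 0] by simp
  note summable = summable_lac_amp_mult_powr[OF assms(3)]
  have term_le: "\<bar>lac_term d x k - lac_term d y k\<bar> \<le> M * (lac_amp k * lac_scale (Suc k) powr \<alpha>) * h powr \<alpha>" for k
  proof -
    define b where "b = lac_scale (Suc k)"
    have b: "0 < b" unfolding b_def by (rule lac_scale_pos)
    have "\<bar>dist_int (b * x) - dist_int (b * y)\<bar> \<le> min 1 (b * h)"
      using dist_int_lipschitz[of "b * x" "b * y"] b dist_int_nonneg[of "b * x"] dist_int_nonneg[of "b * y"]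
        dist_int_le_half[of "b * x"] dist_int_le_half[of "b * y"]
      unfolding h_def by (auto simp: abs_mult right_diff_distrib[symmetric])
    also have "\<dots> \<le> (b * h) powr \<alpha>"
      using assms b unfolding h_def by (intro min_one_le_powr) auto
    finally have "\<bar>lac_term d x k - lac_term d y k\<bar> \<le> M * lac_amp k * (b * h) powr \<alpha>"
      unfolding abs_lac_term_diff b_def using assms(1) M lac_amp_pos[of k]
      by (intro mult_mono) (simp_all add: less_imp_le)
    then show ?thesis
      using b unfolding h_def b_def by (simp add: powr_mult mult_ac)
  qed
  have "lacunary d x - lacunary d y = (\<Sum>k. lac_term d x k - lac_term d y k)"
    unfolding lacunary_def by (rule suminf_diff[OF summable_lac_term summable_lac_term]) (use assms in auto)
  then have "\<bar>lacunary d x - lacunary d y\<bar> = norm (\<Sum>k. lac_term d x k - lac_term d y k)"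
    by simp
  also have "\<dots> \<le> (\<Sum>k. M * (lac_amp k * lac_scale (Suc k) powr \<alpha>) * h powr \<alpha>)"
    by (rule norm_suminf_le) (use term_le in simp, intro summable_mult summable_mult2 summable)
  also have "\<dots> = (\<Sum>k. M * (lac_amp k * lac_scale (Suc k) powr \<alpha>)) * h powr \<alpha>"
    by (rule suminf_mult2[OF summable_mult[OF summable], symmetric])
  also have "\<dots> = M * (\<Sum>k. lac_amp k * lac_scale (Suc k) powr \<alpha>) * h powr \<alpha>"
    by (simp add: suminf_mult[OF summable])
  finally show ?thesis unfolding h_def .
qed

lemma lacunary_holder_on_unit_interval:
  assumes "\<And>k. \<bar>d k\<bar> \<le> M" "\<alpha> < 1"
  shows "\<exists>C. \<forall>x\<in>{0..1}. \<forall>y\<in>{0..1}. \<bar>lacunary d x - lacunary d y\<bar> \<le> C * \<bar>x - y\<bar> powr \<alpha>"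
proof -
  define \<beta> where "\<beta> = max \<alpha> 0"
  have \<beta>: "0 \<le> \<beta>" "\<beta> < 1" "\<alpha> \<le> \<beta>" unfolding \<beta>_def using assms by auto
  define C where "C = M * (\<Sum>k. lac_amp k * lac_scale (Suc k) powr \<beta>)"
  have "0 \<le> C"
    unfolding C_def using assms(1)[of 0] summable_lac_amp_mult_powr[OF \<beta>(2)] lac_amp_pos lac_scale_pos
    by (intro mult_nonneg_nonneg suminf_nonneg) (auto intro: less_imp_le)
  have "\<bar>lacunary d x - lacunary d y\<bar> \<le> C * \<bar>x - y\<bar> powr \<alpha>" if "x \<in> {0..1}" "y \<in> {0..1}" for x y
  proof -
    have "\<bar>lacunary d x - lacunary d y\<bar> \<le> C * \<bar>x - y\<bar> powr \<beta>"
      unfolding C_def by (rule lacunary_holder[OF assms(1) \<beta>(1,2)])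
    also have "\<dots> \<le> C * \<bar>x - y\<bar> powr \<alpha>"
      using that \<beta> \<open>0 \<le> C\<close> by (intro mult_left_mono powr_mono') auto
    finally show ?thesis .
  qed
  then show ?thesis by blast
qed

section \<open>Unbounded difference quotients\<close>

lemma lacunary_remainder_le:
  assumes d: "\<And>j. \<bar>d j\<bar> \<le> M" and m: "0 < m" and big: "128 * M \<le> m * 2 ^ k"
    and step: "1 \<le> 4 * lac_scale (Suc k) * \<bar>y - x\<bar>"
  shows "\<bar>lacunary d y - lacunary d x - (lac_term d y k - lac_term d x k)\<bar> \<le> m * lac_scale k * \<bar>y - x\<bar> / 8"
proof -
  define A where "A = lac_scale k"
  define h where "h = \<bar>y - x\<bar>"
  have M: "0 \<le> M" using d[of 0] by simp
  have A: "2 ^ k \<le> A" "0 < A" using lac_scale_ge_pow[of k] lac_scale_pos[of k] unfolding A_def by simp_all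
  have h: "0 \<le> h" unfolding h_def by simp
  have ratio: "M * A / 2 ^ k \<le> m * A / 128"
    using big A by (simp add: field_simps mult_left_mono)
  have err1: "M * h * A / 2 ^ k \<le> m * A * h / 128"
    using mult_right_mono[OF ratio h] by (simp add: algebra_simps)
  have "lac_scale (Suc k) * lac_amp (Suc k) \<le> lac_scale (Suc k) * (4 * h)"
    using lac_scale_mult_amp_le[of "Suc k"] step unfolding h_def by (simp add: mult.assoc)
  then have "lac_amp (Suc k) \<le> 4 * h" using lac_scale_pos[of "Suc k"] by simp
  then have "2 * M * lac_amp (Suc k) \<le> 8 * M * h" using mult_left_mono[OF _ M] by fastforce
  also have "\<dots> \<le> m * A * h / 16"
  proof -
    have "m * 2 ^ k \<le> m * A" using A(1) m by (intro mult_left_mono) auto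
    then have "128 * M * h \<le> m * A * h" using big h by (intro mult_right_mono) auto
    then show ?thesis by simp
  qed
  finally have err2: "2 * M * lac_amp (Suc k) \<le> m * A * h / 16" .
  show ?thesis
    using lacunary_diff_approx[where d=d and M=M and y=y and x=x and k=k, OF d] err1 err2
    unfolding h_def A_def by linarith
qed

lemma lacunary_jump:
  assumes d: "\<And>j. \<bar>d j\<bar> \<le> M" and m: "0 < m" "m \<le> \<bar>d k\<bar>" and big: "128 * M \<le> m * 2 ^ k"
    and \<sigma>: "\<bar>\<sigma>\<bar> = 1"
  shows "\<exists>h. 0 < h \<and> h \<le> 1 / 2 ^ k \<and>
           m * lac_scale k / 8 \<le> \<bar>lacunary d (x + \<sigma> * h) - lacunary d x\<bar> / h"
proof -
  define A where "A = lac_scale k"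
  define b where "b = lac_scale (Suc k)"
  have b: "0 < b" "2 ^ k \<le> b" using lac_scale_pos[of "Suc k"] lac_scale_ge_pow[of "Suc k"]
    unfolding b_def by simp_all
  obtain t where t: "1/4 \<le> t" "t \<le> 1" "1/4 \<le> \<bar>dist_int (b * x + \<sigma> * t) - dist_int (b * x)\<bar>"
    using dist_int_jump[OF \<sigma>, of "b * x"] by auto
  define h where "h = t / b"
  define y where "y = x + \<sigma> * h"
  have h: "0 < h" "1 \<le> 4 * b * h" "b * h \<le> 1"
    using t b unfolding h_def by (auto simp: field_simps)
  have yx: "\<bar>y - x\<bar> = h" unfolding y_def using \<sigma> h by (simp add: abs_mult)
  have by_eq: "b * y = b * x + \<sigma> * t" unfolding y_def h_def using b by (simp add: algebra_simps)
  have "b * h * A \<le> 1 * A"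
    using h(3) lac_scale_pos[of k] unfolding A_def by (intro mult_right_mono) auto
  then have amp: "A * h \<le> lac_amp k"
    using b unfolding lac_amp_def A_def b_def[symmetric] by (simp add: field_simps)
  have "m * (A * h) * (1/4) \<le> \<bar>d k\<bar> * lac_amp k * \<bar>dist_int (b * y) - dist_int (b * x)\<bar>"
    using m amp t h lac_scale_pos[of k] lac_amp_pos[of k] unfolding A_def
    by (intro mult_mono) (auto simp: by_eq)
  then have "m * A * h / 4 \<le> \<bar>lac_term d y k - lac_term d x k\<bar>"
    unfolding abs_lac_term_diff b_def[symmetric] by simp
  moreover have "\<bar>lacunary d y - lacunary d x - (lac_term d y k - lac_term d x k)\<bar> \<le> m * A * h / 8"
    using lacunary_remainder_le[where d=d and M=M and y=y and x=x, OF d m(1) big] h(2)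
    unfolding yx A_def b_def by simp
  ultimately have "m * A * h / 8 \<le> \<bar>lacunary d y - lacunary d x\<bar>"
    by linarith
  then have "m * A / 8 \<le> \<bar>lacunary d y - lacunary d x\<bar> / h"
    using h by (simp add: field_simps)
  moreover have "h \<le> 1 / 2 ^ k"
  proof -
    have "h \<le> 1 / b" using h(3) b(1) by (simp add: field_simps mult.commute)
    also have "\<dots> \<le> 1 / 2 ^ k" using b by (simp add: frac_le)
    finally show ?thesis .
  qed
  ultimately show ?thesis using h unfolding y_def A_def by blast
qed

lemma lacunary_unbounded_slopes:
  assumes d: "\<And>j. \<bar>d j\<bar> \<le> M" and m: "0 < m" and large: "\<exists>\<^sub>F k in sequentially. m \<le> \<bar>d k\<bar>"
    and \<sigma>: "\<bar>\<sigma>\<bar> = 1" and r: "0 < r"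
  shows "\<exists>h. 0 < h \<and> h < r \<and> B \<le> \<bar>lacunary d (x + \<sigma> * h) - lacunary d x\<bar> / h"
proof -
  have "\<forall>\<^sub>F k in sequentially. 128 * M / m \<le> 2 ^ k \<and> 8 * B / m \<le> 2 ^ k \<and> 2 / r \<le> 2 ^ k"
    by (intro eventually_conj eventually_le_power_2)
  then obtain k where k: "m \<le> \<bar>d k\<bar>" "128 * M / m \<le> 2 ^ k" "8 * B / m \<le> 2 ^ k" "2 / r \<le> 2 ^ k"
    using frequently_eventually_conj[OF large] by (auto dest: frequently_ex)
  have big: "128 * M \<le> m * 2 ^ k" and B: "8 * B \<le> m * 2 ^ k"
    using k m by (simp_all add: field_simps)
  obtain h where h: "0 < h" "h \<le> 1 / 2 ^ k"
    and slope: "m * lac_scale k / 8 \<le> \<bar>lacunary d (x + \<sigma> * h) - lacunary d x\<bar> / h"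
    using lacunary_jump[where d=d and M=M and k=k and x=x, OF d m k(1) big \<sigma>] by blast
  have "1 / 2 ^ k \<le> r / 2"
    using k(4) r by (simp add: field_simps)
  then have "h < r"
    using h r by linarith
  have "m * 2 ^ k \<le> m * lac_scale k"
    using lac_scale_ge_pow[of k] m by (intro mult_left_mono) auto
  then have "B \<le> m * lac_scale k / 8"
    using B by simp
  then show ?thesis using order_trans[OF _ slope] h \<open>h < r\<close> by blast
qed

section \<open>Level sets\<close>

text \<open>On a half-period of the \<open>k\<close>-th term that term is affine with slope \<open>\<plusminus>d k * A k\<close>, so
  two points of a level set in it can only be as far apart as the remainder allows.\<close>

lemma lacunary_level_set_on_half_interval:
  assumes d: "\<And>j. \<bar>d j\<bar> \<le> M" and m: "0 < m" "m \<le> \<bar>d k\<bar>" and big: "8 * M \<le> m * 2 ^ k"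
    and x: "lac_scale (Suc k) * x \<in> {of_int i / 2 .. (of_int i + 1) / 2}"
    and y: "lac_scale (Suc k) * y \<in> {of_int i / 2 .. (of_int i + 1) / 2}"
    and eq: "lacunary d x = lacunary d y"
  shows "\<bar>y - x\<bar> \<le> 4 * M * lac_amp (Suc k) / m"
proof -
  define A where "A = lac_scale k"
  have A: "2 ^ k \<le> A" "1 \<le> A" using lac_scale_ge_pow[of k] lac_scale_ge_2[of k] unfolding A_def by simp_all
  have "\<bar>lac_term d y k - lac_term d x k\<bar> = \<bar>d k\<bar> * lac_amp k * (lac_scale (Suc k) * \<bar>y - x\<bar>)"
    unfolding abs_lac_term_diff dist_int_diff_on_half_interval[OF y x] using lac_scale_pos[of "Suc k"]
    by (simp add: abs_mult right_diff_distrib[symmetric])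
  also have "\<dots> = \<bar>d k\<bar> * A * \<bar>y - x\<bar>"
    unfolding A_def lac_amp_def using lac_scale_pos[of "Suc k"] by simp
  finally have "m * A * \<bar>y - x\<bar> \<le> \<bar>lac_term d y k - lac_term d x k\<bar>"
    using m A by (simp add: mult_right_mono)
  moreover have "M * \<bar>y - x\<bar> * A / 2 ^ k \<le> m * A * \<bar>y - x\<bar> / 8"
  proof -
    have "8 * M * (A * \<bar>y - x\<bar>) \<le> m * 2 ^ k * (A * \<bar>y - x\<bar>)"
      using big A by (intro mult_right_mono) auto
    then show ?thesis by (simp add: field_simps)
  qed
  ultimately have "m * A * \<bar>y - x\<bar> \<le> m * A * \<bar>y - x\<bar> / 8 + 2 * M * lac_amp (Suc k)"
    using lacunary_diff_approx[where d=d and M=M and y=y and x=x and k=k, OF d] eq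
    unfolding A_def[symmetric] by linarith
  moreover have "0 \<le> M * lac_amp (Suc k)"
    using d[of 0] lac_amp_pos[of "Suc k"] by simp
  ultimately have "m * A * \<bar>y - x\<bar> \<le> 4 * M * lac_amp (Suc k)"
    by linarith
  moreover have "m * \<bar>y - x\<bar> \<le> m * A * \<bar>y - x\<bar>"
  proof -
    have "1 * \<bar>y - x\<bar> \<le> A * \<bar>y - x\<bar>" using A(2) by (intro mult_right_mono) auto
    from mult_left_mono[OF this, of m] show ?thesis using m by (simp add: mult.assoc)
  qed
  ultimately have "m * \<bar>y - x\<bar> \<le> 4 * M * lac_amp (Suc k)"
    by linarith
  then show ?thesis
    using m by (simp add: pos_le_divide_eq mult.commute)
qed

lemma lacunary_level_set_hausdorff_pre_le:
  assumes d: "\<And>j. \<bar>d j\<bar> \<le> M" and m: "0 < m" "m \<le> \<bar>d k\<bar>" and big: "8 * M \<le> m * 2 ^ k"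
    and small: "4 * M / m * lac_amp (Suc k) \<le> \<delta>" and s: "0 \<le> s"
  shows "hausdorff_pre s \<delta> {x \<in> {0..1}. lacunary d x = c}
           \<le> ennreal (3 * (4 * M / m) powr s * (lac_scale (Suc k) * lac_amp (Suc k) powr s))"
proof -
  define L where "L = {x \<in> {0..1}. lacunary d x = c}"
  define b where "b = lac_scale (Suc k)"
  define w where "w = 4 * M / m * lac_amp (Suc k)"
  define n where "n = Suc (nat \<lfloor>2 * b\<rfloor>)"
  define U where "U i = {x \<in> L. b * x \<in> {of_int (int i) / 2 .. (of_int (int i) + 1) / 2}}" for i
  have C: "0 \<le> 4 * M / m" using d[of 0] m by simp
  have b: "1 \<le> b" using lac_scale_ge_2[of "Suc k"] unfolding b_def by simp
  have w: "0 \<le> w" "w \<le> \<delta>"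
    unfolding w_def using mult_nonneg_nonneg[OF C less_imp_le[OF lac_amp_pos]] small by simp_all
  have cover: "L \<subseteq> (\<Union>i<n. U i)"
  proof
    fix x assume "x \<in> L"
    then obtain i where "i < n" "b * x \<in> {of_int (int i) / 2 .. (of_int (int i) + 1) / 2}"
      using half_period_index[of b x] b unfolding L_def n_def by auto
    with \<open>x \<in> L\<close> show "x \<in> (\<Union>i<n. U i)" unfolding U_def by blast
  qed
  have close: "norm (x - y) \<le> w" if "x \<in> U i" "y \<in> U i" for i x y
  proof -
    have "\<bar>x - y\<bar> \<le> 4 * M * lac_amp (Suc k) / m"
      using that unfolding U_def L_def b_def
      by (intro lacunary_level_set_on_half_interval[where d=d and M=M and k=k and i="int i", OF d m big])
        auto
    then show ?thesis unfolding w_def by simp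
  qed
  have "hausdorff_pre s \<delta> L \<le> ennreal (real n * w powr s)"
    by (rule hausdorff_pre_le_finite_cover[OF cover close w s])
  also have "\<dots> \<le> ennreal (3 * (4 * M / m) powr s * (b * lac_amp (Suc k) powr s))"
  proof (rule ennreal_leI)
    have "real n \<le> 3 * b" unfolding n_def using b by linarith
    then have "real n * w powr s \<le> 3 * b * w powr s" by (intro mult_right_mono) auto
    also have "\<dots> = 3 * (4 * M / m) powr s * (b * lac_amp (Suc k) powr s)"
      unfolding w_def powr_mult by (simp only: mult_ac)
    finally show "real n * w powr s \<le> 3 * (4 * M / m) powr s * (b * lac_amp (Suc k) powr s)" .
  qed
  finally show ?thesis unfolding L_def b_def .
qed

lemma lacunary_level_set_hausdorff_pre_0:
  assumes d: "\<And>j. \<bar>d j\<bar> \<le> M" and m: "0 < m" and large: "\<exists>\<^sub>F k in sequentially. m \<le> \<bar>d k\<bar>"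
    and s: "0 < s" and \<delta>: "0 < \<delta>"
  shows "hausdorff_pre s \<delta> {x \<in> {0..1}. lacunary d x = c} = 0"
proof -
  define L where "L = {x \<in> {0..1}. lacunary d x = c}"
  define C where "C = 4 * M / m"
  have amp_lim: "(\<lambda>k. C * lac_amp (Suc k)) \<longlonglongrightarrow> 0"
    by (rule tendsto_mult_right_zero, rule LIMSEQ_Suc, rule summable_LIMSEQ_zero[OF summable_lac_amp])
  have cost_lim: "(\<lambda>k. 3 * C powr s * (lac_scale (Suc k) * lac_amp (Suc k) powr s)) \<longlonglongrightarrow> 0"
    by (rule tendsto_mult_right_zero, rule LIMSEQ_Suc, rule lac_scale_mult_amp_powr_tendsto_0[OF s])
  have le_eps: "hausdorff_pre s \<delta> L \<le> ennreal \<epsilon>" if "0 < \<epsilon>" for \<epsilon>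
  proof -
    have "\<forall>\<^sub>F k in sequentially. 8 * M / m \<le> 2 ^ k \<and> C * lac_amp (Suc k) < \<delta> \<and>
            3 * C powr s * (lac_scale (Suc k) * lac_amp (Suc k) powr s) < \<epsilon>"
      by (intro eventually_conj eventually_le_power_2 order_tendstoD(2)[OF amp_lim]
          order_tendstoD(2)[OF cost_lim]) (use \<delta> that in simp_all)
    then obtain k where k: "m \<le> \<bar>d k\<bar>" "8 * M / m \<le> 2 ^ k" "C * lac_amp (Suc k) < \<delta>"
        "3 * C powr s * (lac_scale (Suc k) * lac_amp (Suc k) powr s) < \<epsilon>"
      using frequently_eventually_conj[OF large] by (auto dest: frequently_ex)
    have "8 * M \<le> m * 2 ^ k" using k(2) m by (simp add: field_simps)
    then have "hausdorff_pre s \<delta> L \<le> ennreal (3 * C powr s * (lac_scale (Suc k) * lac_amp (Suc k) powr s))"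
      unfolding C_def L_def using k(3) s
      by (intro lacunary_level_set_hausdorff_pre_le[where d=d and M=M, OF d m k(1)]) (simp_all add: C_def)
    also have "\<dots> \<le> ennreal \<epsilon>"
      using k(4) by (intro ennreal_leI) simp
    finally show ?thesis .
  qed
  have "hausdorff_pre s \<delta> L \<le> 0"
    by (rule ennreal_le_epsilon) (simp add: le_eps)
  then show ?thesis unfolding L_def by simp
qed

definition lac_fun :: "(nat \<Rightarrow> real) \<Rightarrow> real \<Rightarrow> real" where
  "lac_fun d x = (if x \<in> {0..1} then lacunary d x else 0)"

lemma lac_fun_in_C0_01:
  assumes "\<And>k. \<bar>d k\<bar> \<le> M"
  shows "lac_fun d \<in> C0_01"
proof -
  obtain C where "\<forall>x\<in>{0..1}. \<forall>y\<in>{0..1}. \<bar>lacunary d x - lacunary d y\<bar> \<le> C * \<bar>x - y\<bar> powr (1/2)"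
    using lacunary_holder_on_unit_interval[of d M "1/2", OF assms] by auto
  then have "continuous_on {0..1} (lac_fun d)"
    by (intro holder_imp_continuous_on[of "1/2" _ _ C]) (simp_all add: lac_fun_def)
  moreover have "\<forall>x. x \<notin> {0..1} \<longrightarrow> lac_fun d x = 0"
    by (simp add: lac_fun_def)
  ultimately show ?thesis unfolding C0_01_def by blast
qed

lemma lac_fun_not_right_differentiable:
  assumes "\<And>j. \<bar>d j\<bar> \<le> M" "0 < m" "\<exists>\<^sub>F k in sequentially. m \<le> \<bar>d k\<bar>" and x: "x \<in> {0..<1}"
  shows "\<not> (lac_fun d has_real_derivative D) (at x within {x..1})"
proof (rule not_has_real_derivative_if_unbounded_slopes)
  fix B r :: real assume "0 < r"
  then obtain h where h: "0 < h" "h < min r (1 - x)"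
    and slope: "B \<le> \<bar>lacunary d (x + 1 * h) - lacunary d x\<bar> / h"
    using lacunary_unbounded_slopes[where d=d and M=M and x=x and B=B, OF assms(1-3), of 1 "min r (1 - x)"] x
    by auto
  define y where "y = x + h"
  have y: "y \<in> {x..1}" "y \<noteq> x" "\<bar>y - x\<bar> < r" using h x unfolding y_def by auto
  have "\<bar>(lac_fun d y - lac_fun d x) / (y - x)\<bar> = \<bar>lacunary d (x + 1 * h) - lacunary d x\<bar> / h"
    using x y h unfolding y_def by (simp add: lac_fun_def abs_divide)
  then show "\<exists>y\<in>{x..1}. y \<noteq> x \<and> \<bar>y - x\<bar> < r \<and> B \<le> \<bar>(lac_fun d y - lac_fun d x) / (y - x)\<bar>"
    using y slope by auto
qed

lemma lac_fun_not_left_differentiable: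
  assumes "\<And>j. \<bar>d j\<bar> \<le> M" "0 < m" "\<exists>\<^sub>F k in sequentially. m \<le> \<bar>d k\<bar>" and x: "x \<in> {0<..1}"
  shows "\<not> (lac_fun d has_real_derivative D) (at x within {0..x})"
proof (rule not_has_real_derivative_if_unbounded_slopes)
  fix B r :: real assume "0 < r"
  then obtain h where h: "0 < h" "h < min r x"
    and slope: "B \<le> \<bar>lacunary d (x + -1 * h) - lacunary d x\<bar> / h"
    using lacunary_unbounded_slopes[where d=d and M=M and x=x and B=B, OF assms(1-3), of "-1" "min r x"] x
    by auto
  define y where "y = x - h"
  have y: "y \<in> {0..x}" "y \<noteq> x" "\<bar>y - x\<bar> < r" using h x unfolding y_def by auto
  have "\<bar>(lac_fun d y - lac_fun d x) / (y - x)\<bar> = \<bar>lacunary d (x + -1 * h) - lacunary d x\<bar> / h"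
    using x y h unfolding y_def by (simp add: lac_fun_def abs_divide)
  then show "\<exists>y\<in>{0..x}. y \<noteq> x \<and> \<bar>y - x\<bar> < r \<and> B \<le> \<bar>(lac_fun d y - lac_fun d x) / (y - x)\<bar>"
    using y slope by auto
qed

lemma lac_fun_regularity:
  assumes d: "\<And>k. \<bar>d k\<bar> \<le> M" and m: "0 < m" and large: "\<exists>\<^sub>F k in sequentially. m \<le> \<bar>d k\<bar>"
  defines "f \<equiv> lac_fun d"
  shows "(\<forall>\<alpha>::real. \<alpha> < 1 \<longrightarrow>
          (\<exists>C::real. \<forall>x \<in> {0..1}. \<forall>y \<in> {0..1}. \<bar>f x - f y\<bar> \<le> C * \<bar>x - y\<bar> powr \<alpha>)) \<and>
       (\<forall>x \<in> {0..<1}. \<not> (\<exists>D. (f has_real_derivative D) (at x within {x..1}))) \<and>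
       (\<forall>x \<in> {0<..1}. \<not> (\<exists>D. (f has_real_derivative D) (at x within {0..x}))) \<and>
       (\<forall>c::real. hausdorff_dim {x \<in> {0..1}. f x = c} = 0)"
proof (intro conjI allI impI ballI notI)
  have f: "\<And>y. y \<in> {0..1} \<Longrightarrow> f y = lacunary d y"
    unfolding f_def lac_fun_def by simp
  show "\<exists>C. \<forall>x\<in>{0..1}. \<forall>y\<in>{0..1}. \<bar>f x - f y\<bar> \<le> C * \<bar>x - y\<bar> powr \<alpha>" if "\<alpha> < 1" for \<alpha>
    using lacunary_holder_on_unit_interval[of d M \<alpha>, OF d that] f by simp
  show False if "x \<in> {0..<1}" "\<exists>D. (f has_real_derivative D) (at x within {x..1})" for x
    using lac_fun_not_right_differentiable[where d=d and M=M, OF d m large, folded f_def] that by blast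
  show False if "x \<in> {0<..1}" "\<exists>D. (f has_real_derivative D) (at x within {0..x})" for x
    using lac_fun_not_left_differentiable[where d=d and M=M, OF d m large, folded f_def] that by blast
  have "{x \<in> {0..1}. f x = c} = {x \<in> {0..1}. lacunary d x = c}" for c
    using f by auto
  then show "hausdorff_dim {x \<in> {0..1}. f x = c} = 0" for c
    using lacunary_level_set_hausdorff_pre_0[OF d m large] by (simp add: hausdorff_dim_eq_0I)
qed

lemma lac_fun_nonzero:
  assumes "\<And>k. \<bar>d k\<bar> \<le> M" "0 < m" "\<exists>\<^sub>F k in sequentially. m \<le> \<bar>d k\<bar>"
  shows "lac_fun d \<noteq> 0"
proof
  assume "lac_fun d = 0"
  moreover have "\<not> (\<exists>D. (lac_fun d has_real_derivative D) (at 0 within {0..1}))"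
    using lac_fun_regularity[OF assms] by simp
  moreover have "((\<lambda>x. 0) has_real_derivative 0) (at 0 within {0..1})"
    by (rule DERIV_const)
  ultimately show False
    by (auto simp: zero_fun_def)
qed

lemma sum_fscale_lac_fun:
  assumes "finite T" "\<And>t k. t \<in> T \<Longrightarrow> \<bar>e t k\<bar> \<le> M"
  shows "(\<Sum>t\<in>T. fscale (c t) (lac_fun (e t))) = lac_fun (\<lambda>k. \<Sum>t\<in>T. c t * e t k)"
proof
  fix x
  have pointwise: "(\<Sum>t\<in>T. fscale (c t) (lac_fun (e t))) x = (\<Sum>t\<in>T. c t * lac_fun (e t) x)"
    unfolding sum_fun_apply fscale_def ..
  show "(\<Sum>t\<in>T. fscale (c t) (lac_fun (e t))) x = lac_fun (\<lambda>k. \<Sum>t\<in>T. c t * e t k) x"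
  proof (cases "x \<in> {0..1}")
    case True
    have summable: "summable (lac_term (e t) x)" if "t \<in> T" for t
      using assms(2)[OF that] by (rule summable_lac_term)
    have "(\<Sum>t\<in>T. c t * lacunary (e t) x) = (\<Sum>t\<in>T. \<Sum>k. c t * lac_term (e t) x k)"
      unfolding lacunary_def using summable by (simp add: suminf_mult)
    also have "\<dots> = (\<Sum>k. \<Sum>t\<in>T. c t * lac_term (e t) x k)"
      using summable by (intro suminf_sum[symmetric] summable_mult) auto
    also have "\<dots> = lacunary (\<lambda>k. \<Sum>t\<in>T. c t * e t k) x"
      unfolding lacunary_def lac_term_def by (simp add: sum_distrib_right mult.assoc)
    finally show ?thesis
      unfolding pointwise lac_fun_def using True by simp
  next
    case False
    then have "lac_fun g x = 0" for g by (auto simp: lac_fun_def)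
    then show ?thesis unfolding pointwise by simp
  qed
qed

section \<open>A continuum of independent series\<close>

text \<open>Distinct sets have only finitely many prefix codes in common, so a finite combination of
  the indicator sequences of the code sets equals any one of its coefficients infinitely often.\<close>

definition prefix_codes :: "nat set \<Rightarrow> nat set" where
  "prefix_codes t = range (\<lambda>n. to_nat (map (\<lambda>i. i \<in> t) [0..<n]))"

lemma prefix_code_eq_iff:
  "to_nat (map (\<lambda>i. i \<in> s) [0..<n]) = to_nat (map (\<lambda>i. i \<in> t) [0..<n'])
     \<longleftrightarrow> n = n' \<and> (\<forall>i<n. i \<in> s \<longleftrightarrow> i \<in> t)" (is "?lhs \<longleftrightarrow> ?rhs")
proof
  assume ?lhs
  then have eq: "map (\<lambda>i. i \<in> s) [0..<n] = map (\<lambda>i. i \<in> t) [0..<n']"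
    by (simp add: inj_eq[OF inj_to_nat])
  then have "n = n'"
    by (metis length_map length_upt diff_zero)
  with eq show ?rhs
    by (simp add: map_eq_conv)
qed (simp add: inj_eq[OF inj_to_nat] map_eq_conv)

lemma infinite_prefix_codes: "infinite (prefix_codes t)"
  unfolding prefix_codes_def by (rule range_inj_infinite, rule injI) (metis prefix_code_eq_iff)

lemma finite_prefix_codes_Int:
  assumes "s \<noteq> t"
  shows "finite (prefix_codes s \<inter> prefix_codes t)"
proof -
  obtain j where j: "(j \<in> s) \<noteq> (j \<in> t)" using assms by blast
  have "prefix_codes s \<inter> prefix_codes t \<subseteq> (\<lambda>n. to_nat (map (\<lambda>i. i \<in> t) [0..<n])) ` {..j}"
  proof
    fix k assume "k \<in> prefix_codes s \<inter> prefix_codes t"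
    then obtain n n' where k: "k = to_nat (map (\<lambda>i. i \<in> s) [0..<n])" "k = to_nat (map (\<lambda>i. i \<in> t) [0..<n'])"
      unfolding prefix_codes_def by blast
    then have "n = n'" "\<forall>i<n. i \<in> s \<longleftrightarrow> i \<in> t"
      using prefix_code_eq_iff by metis+
    then have "n' \<le> j" using j by (meson not_le)
    then show "k \<in> (\<lambda>n. to_nat (map (\<lambda>i. i \<in> t) [0..<n])) ` {..j}"
      using k(2) by auto
  qed
  then show ?thesis by (rule finite_subset) simp
qed

lemma frequently_sum_indicator_prefix_codes:
  fixes c :: "nat set \<Rightarrow> real"
  assumes "finite T" "t0 \<in> T"
  shows "\<exists>\<^sub>F k in sequentially. (\<Sum>t\<in>T. c t * indicator (prefix_codes t) k) = c t0"
proof -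
  define E where "E = (\<Union>s\<in>T - {t0}. prefix_codes s \<inter> prefix_codes t0)"
  have "finite E"
    unfolding E_def using assms(1) by (intro finite_UN_I) (auto intro: finite_prefix_codes_Int)
  then have inf: "infinite (prefix_codes t0 - E)"
    using infinite_prefix_codes by (rule Diff_infinite_finite)
  have eq: "(\<Sum>t\<in>T. c t * indicator (prefix_codes t) k) = c t0" if "k \<in> prefix_codes t0 - E" for k
  proof -
    have "(\<Sum>t\<in>T. c t * indicator (prefix_codes t) k)
        = c t0 * indicator (prefix_codes t0) k + (\<Sum>t\<in>T - {t0}. c t * indicator (prefix_codes t) k)"
      by (rule sum.remove[OF assms])
    also have "\<dots> = c t0"
    proof -
      have "k \<notin> prefix_codes t" if "t \<in> T - {t0}" for t
        using \<open>k \<in> prefix_codes t0 - E\<close> that unfolding E_def by blast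
      then have "(\<Sum>t\<in>T - {t0}. c t * indicator (prefix_codes t) k) = 0"
        by (intro sum.neutral) simp
      moreover have "indicator (prefix_codes t0) k = (1::real)"
        using \<open>k \<in> prefix_codes t0 - E\<close> by simp
      ultimately show ?thesis by simp
    qed
    finally show ?thesis .
  qed
  have "prefix_codes t0 - E \<subseteq> {k. (\<Sum>t\<in>T. c t * indicator (prefix_codes t) k) = c t0}"
    using eq by blast
  from infinite_super[OF this inf] show ?thesis
    unfolding cofinite_eq_sequentially[symmetric] frequently_cofinite .
qed

definition lac_basis :: "nat set \<Rightarrow> real \<Rightarrow> real" where
  "lac_basis t = lac_fun (indicator (prefix_codes t))"

lemma sum_fscale_lac_basis:
  assumes "finite T"
  shows "(\<Sum>t\<in>T. fscale (c t) (lac_basis t)) = lac_fun (\<lambda>k. \<Sum>t\<in>T. c t * indicator (prefix_codes t) k)"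
  unfolding lac_basis_def using assms by (rule sum_fscale_lac_fun[where M=1]) (simp add: indicator_def)

lemma sum_fscale_lac_basis_in_C0_01:
  assumes "finite T"
  shows "(\<Sum>t\<in>T. fscale (c t) (lac_basis t)) \<in> C0_01"
  unfolding sum_fscale_lac_basis[OF assms]
  by (rule lac_fun_in_C0_01[where M="\<Sum>t\<in>T. \<bar>c t\<bar>"], rule order_trans[OF sum_abs sum_mono])
     (simp add: abs_mult indicator_def)

lemma sum_fscale_lac_basis_regularity:
  assumes "finite T" "t0 \<in> T" "c t0 \<noteq> 0"
  defines "f \<equiv> (\<Sum>t\<in>T. fscale (c t) (lac_basis t))"
  shows "f \<noteq> 0"
    "(\<forall>\<alpha>::real. \<alpha> < 1 \<longrightarrow>
          (\<exists>C::real. \<forall>x \<in> {0..1}. \<forall>y \<in> {0..1}. \<bar>f x - f y\<bar> \<le> C * \<bar>x - y\<bar> powr \<alpha>)) \<and>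
       (\<forall>x \<in> {0..<1}. \<not> (\<exists>D. (f has_real_derivative D) (at x within {x..1}))) \<and>
       (\<forall>x \<in> {0<..1}. \<not> (\<exists>D. (f has_real_derivative D) (at x within {0..x}))) \<and>
       (\<forall>c::real. hausdorff_dim {x \<in> {0..1}. f x = c} = 0)"
proof -
  define d where "d k = (\<Sum>t\<in>T. c t * indicator (prefix_codes t) k)" for k
  have f: "f = lac_fun d"
    unfolding f_def d_def using assms(1) by (rule sum_fscale_lac_basis)
  have d: "\<bar>d k\<bar> \<le> (\<Sum>t\<in>T. \<bar>c t\<bar>)" for k
    unfolding d_def by (rule order_trans[OF sum_abs sum_mono]) (simp add: abs_mult indicator_def)
  have large: "\<exists>\<^sub>F k in sequentially. \<bar>c t0\<bar> \<le> \<bar>d k\<bar>"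
    using frequently_sum_indicator_prefix_codes[OF assms(1,2), of c] unfolding d_def
    by (auto elim: frequently_elim1)
  have m: "0 < \<bar>c t0\<bar>" using assms(3) by simp
  show "f \<noteq> 0" unfolding f using d m large by (rule lac_fun_nonzero)
  show "(\<forall>\<alpha>::real. \<alpha> < 1 \<longrightarrow>
          (\<exists>C::real. \<forall>x \<in> {0..1}. \<forall>y \<in> {0..1}. \<bar>f x - f y\<bar> \<le> C * \<bar>x - y\<bar> powr \<alpha>)) \<and>
       (\<forall>x \<in> {0..<1}. \<not> (\<exists>D. (f has_real_derivative D) (at x within {x..1}))) \<and>
       (\<forall>x \<in> {0<..1}. \<not> (\<exists>D. (f has_real_derivative D) (at x within {0..x}))) \<and>
       (\<forall>c::real. hausdorff_dim {x \<in> {0..1}. f x = c} = 0)"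
    unfolding f using d m large by (rule lac_fun_regularity)
qed

interpretation fs: module fscale
  by unfold_locales (auto simp: fscale_def fun_eq_iff algebra_simps)

lemma inj_lac_basis: "inj lac_basis"
proof
  fix s t assume eq: "lac_basis s = lac_basis t"
  show "s = t"
  proof (rule ccontr)
    assume "s \<noteq> t"
    define c where "c u = (if u = s then 1 else -1 :: real)" for u
    have "(\<Sum>u\<in>{s, t}. fscale (c u) (lac_basis u)) \<noteq> 0"
      by (rule sum_fscale_lac_basis_regularity(1)) (auto simp: c_def)
    moreover have "(\<Sum>u\<in>{s, t}. fscale (c u) (lac_basis u)) = 0"
      using \<open>s \<noteq> t\<close> eq by (simp add: c_def fscale_def fun_eq_iff)
    ultimately show False by contradiction
  qed
qed

lemma independent_range_lac_basis: "\<not> fs.dependent (range lac_basis)"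
proof
  assume "fs.dependent (range lac_basis)"
  then obtain T c t0 where "finite T" "t0 \<in> T" "c t0 \<noteq> 0" "(\<Sum>t\<in>T. fscale (c t) (lac_basis t)) = 0"
    by (rule fs.dependent_range_explicit)
  then show False using sum_fscale_lac_basis_regularity(1) by blast
qed

lemma span_lac_basis_in_C0_01: "fs.span (range lac_basis) \<subseteq> C0_01"
  by (auto elim!: fs.span_range_explicit intro: sum_fscale_lac_basis_in_C0_01)

lemma span_lac_basis_regularity:
  assumes "f \<in> fs.span (range lac_basis)" "f \<noteq> 0"
  shows "(\<forall>\<alpha>::real. \<alpha> < 1 \<longrightarrow>
          (\<exists>C::real. \<forall>x \<in> {0..1}. \<forall>y \<in> {0..1}. \<bar>f x - f y\<bar> \<le> C * \<bar>x - y\<bar> powr \<alpha>)) \<and>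
       (\<forall>x \<in> {0..<1}. \<not> (\<exists>D. (f has_real_derivative D) (at x within {x..1}))) \<and>
       (\<forall>x \<in> {0<..1}. \<not> (\<exists>D. (f has_real_derivative D) (at x within {0..x}))) \<and>
       (\<forall>c::real. hausdorff_dim {x \<in> {0..1}. f x = c} = 0)"
proof -
  obtain T c where T: "finite T" "f = (\<Sum>t\<in>T. fscale (c t) (lac_basis t))"
    using assms(1) by (rule fs.span_range_explicit)
  moreover have "f = 0" if "\<forall>t\<in>T. c t = 0"
    unfolding T(2) using that by (simp add: fs.scale_zero_left)
  ultimately obtain t0 where "t0 \<in> T" "c t0 \<noteq> 0"
    using assms(2) by blast
  then show ?thesis
    unfolding T(2) by (rule sum_fscale_lac_basis_regularity(2)[OF T(1)])
qed

theorem mainTheorem15: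
  shows "\<exists>V :: (real \<Rightarrow> real) set.
    V \<subseteq> C0_01 \<and> module.subspace fscale V \<and>
    (\<exists>B. B \<subseteq> V \<and> \<not> module.dependent fscale B \<and> module.span fscale B = V \<and>
         B \<approx> (UNIV :: real set)) \<and>
    (\<forall>f \<in> V. f \<noteq> 0 \<longrightarrow>
       (\<forall>\<alpha>::real. \<alpha> < 1 \<longrightarrow>
          (\<exists>C::real. \<forall>x \<in> {0..1}. \<forall>y \<in> {0..1}. \<bar>f x - f y\<bar> \<le> C * \<bar>x - y\<bar> powr \<alpha>)) \<and>
       (\<forall>x \<in> {0..<1}. \<not> (\<exists>D. (f has_real_derivative D) (at x within {x..1}))) \<and>
       (\<forall>x \<in> {0<..1}. \<not> (\<exists>D. (f has_real_derivative D) (at x within {0..x}))) \<and>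
       (\<forall>c::real. hausdorff_dim {x \<in> {0..1}. f x = c} = 0))"
proof (intro exI conjI)
  let ?B = "range lac_basis"
  show "fs.span ?B \<subseteq> C0_01" by (rule span_lac_basis_in_C0_01)
  show "fs.subspace (fs.span ?B)" "?B \<subseteq> fs.span ?B" "fs.span ?B = fs.span ?B"
    by (simp_all add: fs.span_superset)
  show "\<not> fs.dependent ?B" by (rule independent_range_lac_basis)
  have "?B \<approx> (UNIV :: nat set set)"
    using inj_lac_basis by (simp add: inj_on_image_eqpoll_self)
  then show "?B \<approx> (UNIV :: real set)"
    using nat_sets_eqpoll_reals by (rule eqpoll_trans)
qed (use span_lac_basis_regularity in blast)

end
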